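(* Let $n\ge0$, let $\alpha$ be a real constant, let $k_1,\dots,k_N$ be distinct positive numbers and $x_{0,1},\dots,x_{0,N}$ real constants, and put $$f_j=\exp\big(k_jx+(-1)^nk_j^{2n+1}t-\tfrac12\alpha t+x_{0,j}\big),\qquad j=1,\dots,N.$$ Define $$u=2\partial^2\ln W_1(f_1,\dots,f_N),\qquad \phi_j=\frac{W_2(f_1,\dots,f_N,f_j)}{W_1(f_1,\dots,f_N)}=\frac{W_2(f_1,\dots,f_{j-1},f_{j+1},\dots,f_N,f_j)}{W_1(f_1,\dots,f_N)},\quad j=1,\dots,N.$$ Then $u,\phi_1,\dots,\phi_N$ is a solution (the $N$-soliton solution) of the $n$-th KdV equation with self-consistent sources of degree $N$ with $\lambda_j=-k_j^2$: $$u_t=\partial\Big[-2b_{n+2}[u]-2\alpha\sum_{j=1}^N\phi_j^2\Big],\qquad \phi_{j,xx}+(-k_j^2+u)\phi_j=0,\ j=1,\dots,N.$$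
   Context: Let $\partial=\partial/\partial x$ and $\partial^{-1}=\int_{-\infty}^x\cdot\,dx$. For a potential $u(x,t)$ let $L=-\frac14\partial^2-u+\frac12\partial^{-1}u_x$, $b_0=0$, $b_1=1$, $b_{k+1}=Lb_k$ ($k\ge1$); write $b_k[u]$. Here $t=t_n$. For functions $g_1,\dots,g_k$: $W_1(g_1,\dots,g_k)=\det F$ with $F_{ij}=\delta_{ij}+\partial^{-1}(g_ig_j)$, $1\le i,j\le k$; and $W_2(g_1,\dots,g_k)=\det G$ with $G_{ij}=\delta_{ij}+\partial^{-1}(g_ig_j)$ for $1\le i\le k-1$, $1\le j\le k$, and $G_{kj}=g_j$ for $1\le j\le k$. *)

theory Defs
  imports "HOL-Analysis.Analysis" "Jordan_Normal_Form.Determinant"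
begin

definition dx :: "(real \<Rightarrow> real \<Rightarrow> real) \<Rightarrow> real \<Rightarrow> real \<Rightarrow> real" where
  "dx F x t = deriv (\<lambda>y. F y t) x"

definition dt :: "(real \<Rightarrow> real \<Rightarrow> real) \<Rightarrow> real \<Rightarrow> real \<Rightarrow> real" where
  "dt F x t = deriv (\<lambda>s. F x s) t"

text \<open>The inverse of the x-derivative: integral from minus infinity to x.\<close>
definition dinv :: "(real \<Rightarrow> real \<Rightarrow> real) \<Rightarrow> real \<Rightarrow> real \<Rightarrow> real" where
  "dinv F x t = integral {..x} (\<lambda>y. F y t)"

definition Lop :: "(real \<Rightarrow> real \<Rightarrow> real) \<Rightarrow> (real \<Rightarrow> real \<Rightarrow> real) \<Rightarrow> real \<Rightarrow> real \<Rightarrow> real" where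
  "Lop u b x t = - (1/4) * dx (dx b) x t - u x t * b x t
                 + (1/2) * dinv (\<lambda>y s. dx u y s * b y s) x t"

fun bseq :: "(real \<Rightarrow> real \<Rightarrow> real) \<Rightarrow> nat \<Rightarrow> real \<Rightarrow> real \<Rightarrow> real" where
  "bseq u 0 = (\<lambda>x t. 0)"
| "bseq u (Suc 0) = (\<lambda>x t. 1)"
| "bseq u (Suc (Suc k)) = Lop u (bseq u (Suc k))"

definition W1 :: "(real \<Rightarrow> real \<Rightarrow> real) list \<Rightarrow> real \<Rightarrow> real \<Rightarrow> real" where
  "W1 gs x t = Determinant.det (mat (length gs) (length gs)
      (\<lambda>(i,j). (if i = j then 1 else 0) + dinv (\<lambda>y s. (gs ! i) y s * (gs ! j) y s) x t))"

definition W2 :: "(real \<Rightarrow> real \<Rightarrow> real) list \<Rightarrow> real \<Rightarrow> real \<Rightarrow> real" where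
  "W2 gs x t = Determinant.det (mat (length gs) (length gs)
      (\<lambda>(i,j). if i < length gs - 1
               then (if i = j then 1 else 0) + dinv (\<lambda>y s. (gs ! i) y s * (gs ! j) y s) x t
               else (gs ! j) x t))"

end

theory Submission
  imports Defs "HOL-Real_Asymp.Real_Asymp"
begin

text \<open>Put \<open>e\<^sub>j = f\<^sub>j\<close> and \<open>M = I + (e\<^sub>i e\<^sub>j / (k\<^sub>i + k\<^sub>j))\<close>. Then \<open>W\<^sub>1 = det M = \<tau>\<close>, and Cramer's rule turns
  \<open>W\<^sub>2 / W\<^sub>1\<close> into the components of \<open>\<phi> = M\<^sup>-\<^sup>1 e\<close>. The Cauchy matrix \<open>1 / (k\<^sub>i + k\<^sub>j)\<close> is a Gram
  matrix, so \<open>M\<close> is positive definite: \<open>\<tau> > 0\<close> and \<open>|M\<^sup>-\<^sup>1 y| \<le> |y|\<close>. Since \<open>e\<^sub>j\<close> is an exponential in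
  \<open>x\<close> and \<open>t\<close>, the derivatives of \<open>M\<close> are again of Cauchy type, and differentiating \<open>M \<phi> = e\<close>
  gives \<open>(ln \<tau>)\<^sub>x = \<Sum> e\<^sub>j \<phi>\<^sub>j\<close>, \<open>u = 4 \<Sum> k\<^sub>j \<phi>\<^sub>j\<^sup>2\<close>, \<open>\<phi>\<^sub>x\<^sub>x = (k\<^sup>2 - u) \<phi>\<close> and \<open>u\<^sub>t = \<partial>(4 \<Sum> \<omega>\<^sub>j \<phi>\<^sub>j\<^sup>2)\<close>, the
  symmetry of \<open>M\<close> exchanging the roles of \<open>x\<close> and \<open>t\<close>. All these quantities are \<open>O(\<Sum> e\<^sub>j\<^sup>2)\<close>
  as \<open>x \<rightarrow> -\<infinity>\<close>, so the integrals \<open>\<partial>\<^sup>-\<^sup>1\<close> converge without boundary terms; this yields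
  \<open>L(\<phi>\<^sub>i\<^sup>2) = -k\<^sub>i\<^sup>2 \<phi>\<^sub>i\<^sup>2\<close> and \<open>L 1 = -u/2\<close>, hence \<open>b\<^sub>m\<^sub>+\<^sub>2 = -2 \<Sum> k\<^sub>i (-k\<^sub>i\<^sup>2)\<^sup>m \<phi>\<^sub>i\<^sup>2\<close>. With
  \<open>\<omega>\<^sub>j = (-1)\<^sup>n k\<^sub>j\<^sup>2\<^sup>n\<^sup>+\<^sup>1 - \<alpha>/2\<close> the time evolution is the stated flow.\<close>

section \<open>Determinants\<close>

lemma det_mat_eq_sum_permutes:
  "det (mat n n (\<lambda>(i,j). B i j)) = (\<Sum>p | p permutes {0..<n}. signof p * (\<Prod>i=0..<n. B i (p i)))"
proof -
  have "p i < n" if "p permutes {0..<n}" "i < n" for p i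
    using permutes_in_image[OF that(1)] that(2) by simp
  then show ?thesis
    by (subst det_def'[of _ n]) (auto intro!: sum.cong prod.cong)
qed

lemma has_field_derivative_det_mat:
  fixes A :: "nat \<Rightarrow> nat \<Rightarrow> 'a::real_normed_field \<Rightarrow> 'a"
  assumes "\<And>i j. i < n \<Longrightarrow> j < n \<Longrightarrow> (A i j has_field_derivative A' i j) (at s)"
  shows "((\<lambda>s. det (mat n n (\<lambda>(i,j). A i j s))) has_field_derivative
     (\<Sum>r<n. det (mat n n (\<lambda>(i,j). if i = r then A' i j else A i j s)))) (at s)"
proof -
  let ?P = "{p. p permutes {0..<n}}"
  have pin: "p i < n" if "p \<in> ?P" "i < n" for p i
    using permutes_in_image[of p "{0..<n}" i] that by auto
  have prod_row: "(\<Prod>i=0..<n. if i = r then a' i else a i) = a' r * (\<Prod>i\<in>{0..<n}-{r}. a i)"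
    if "r < n" for r and a a' :: "nat \<Rightarrow> 'a"
    using that by (subst prod.remove[of _ r]) (auto intro!: prod.cong)
  have "((\<lambda>s. \<Sum>p\<in>?P. signof p * (\<Prod>i=0..<n. A i (p i) s)) has_field_derivative
      (\<Sum>p\<in>?P. signof p * (\<Sum>i\<in>{0..<n}. A' i (p i) * (\<Prod>j\<in>{0..<n}-{i}. A j (p j) s)))) (at s)"
    using assms pin by (intro DERIV_sum DERIV_cmult has_field_derivative_prod) auto
  also have "(\<Sum>p\<in>?P. signof p * (\<Sum>i\<in>{0..<n}. A' i (p i) * (\<Prod>j\<in>{0..<n}-{i}. A j (p j) s)))
     = (\<Sum>r<n. \<Sum>p\<in>?P. signof p * (\<Prod>i=0..<n. if i = r then A' i (p i) else A i (p i) s))"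
    by (subst sum.swap) (auto simp: sum_distrib_left lessThan_atLeast0 prod_row intro!: sum.cong)
  finally show ?thesis
    by (simp add: det_mat_eq_sum_permutes if_distrib)
qed

lemma det_mat_permute_rows_cols:
  fixes A :: "nat \<Rightarrow> nat \<Rightarrow> 'a::comm_ring_1"
  assumes p: "p permutes {0..<n}"
  shows "det (mat n n (\<lambda>(a,b). A (p a) (p b))) = det (mat n n (\<lambda>(a,b). A a b))"
proof -
  have pin: "p i < n" if "i < n" for i using permutes_in_image[OF p] that by auto
  define B where "B = mat n n (\<lambda>(a,b). A a (p b))"
  define C where "C = mat n n (\<lambda>(a,b). A b a)"
  have Bc: "B \<in> carrier_mat n n" and Cc: "C \<in> carrier_mat n n" by (auto simp: B_def C_def)
  have "mat n n (\<lambda>(a,b). A (p a) (p b)) = mat n n (\<lambda>(i,j). B $$ (p i, j))"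
    by (rule eq_matI) (auto simp: B_def pin)
  then have "det (mat n n (\<lambda>(a,b). A (p a) (p b))) = signof p * det B"
    using det_permute_rows[OF Bc p] by simp
  also have "det B = det (transpose_mat B)" using det_transpose[OF Bc] by simp
  also have "transpose_mat B = mat n n (\<lambda>(i,j). C $$ (p i, j))"
    by (rule eq_matI) (auto simp: B_def C_def pin)
  also have "det \<dots> = signof p * det C" by (rule det_permute_rows[OF Cc p])
  also have "det C = det (transpose_mat C)" using det_transpose[OF Cc] by simp
  also have "transpose_mat C = mat n n (\<lambda>(a,b). A a b)" by (rule eq_matI) (auto simp: C_def)
  finally show ?thesis by (simp add: mult.assoc[symmetric] sign_def)
qed

lemma det_mat_last_column_unit:
  fixes B :: "nat \<Rightarrow> nat \<Rightarrow> 'a::comm_ring_1"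
  shows "det (mat (Suc n) (Suc n) (\<lambda>(r,c). if c < n then B r c else if r = n then 1 else 0))
    = det (mat n n (\<lambda>(r,c). B r c))"
proof -
  define A where "A = mat (Suc n) (Suc n) (\<lambda>(r,c). if c < n then B r c else if r = n then 1 else 0)"
  have A: "A \<in> carrier_mat (Suc n) (Suc n)" by (simp add: A_def)
  have "det A = (\<Sum>i<Suc n. A $$ (i, n) * cofactor A i n)"
    by (rule laplace_expansion_column[OF A]) simp
  also have "\<dots> = det (mat_delete A n n)"
    by (simp add: A_def cofactor_def)
  also have "mat_delete A n n = mat n n (\<lambda>(r,c). B r c)"
    by (rule eq_matI) (auto simp: mat_delete_def A_def)
  finally show ?thesis by (simp add: A_def)
qed

lemma mult_mat_vec_nth_sum:
  assumes "A \<in> carrier_mat n n" "v \<in> carrier_vec n" "i < n"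
  shows "(A *\<^sub>v v) $ i = (\<Sum>j<n. A $$ (i,j) * v $ j)"
  using assms by (simp add: scalar_prod_def lessThan_atLeast0)

lemma cramer_rule_solves:
  fixes A :: "'a::field mat"
  assumes A: "A \<in> carrier_mat n n" and d: "det A \<noteq> 0" and i: "i < n"
  shows "(\<Sum>j<n. A $$ (i,j) * (det (replace_col A (vec n y) j) / det A)) = y i"
proof -
  define B where "B = (1 / det A) \<cdot>\<^sub>m adj_mat A"
  have Bc: "B \<in> carrier_mat n n" using adj_mat(1)[OF A] by (simp add: B_def)
  have "(1 / det A) \<cdot>\<^sub>m (det A \<cdot>\<^sub>m 1\<^sub>m n) = 1\<^sub>m n"
    by (rule eq_matI) (use d in auto)
  then have AB: "A * B = 1\<^sub>m n"
    unfolding B_def using adj_mat[OF A] A by (simp add: mult_smult_distrib)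
  define x where "x = B *\<^sub>v vec n y"
  have xc: "x \<in> carrier_vec n" using Bc by (simp add: x_def)
  have Ax: "A *\<^sub>v x = vec n y"
    unfolding x_def using A Bc by (simp add: assoc_mult_mat_vec[symmetric, of A n n B n] AB)
  have xj: "x $ j = det (replace_col A (vec n y) j) / det A" if "j < n" for j
    using cramer_lemma_mat[OF A xc that] d by (simp add: Ax)
  have "y i = (\<Sum>j<n. A $$ (i,j) * x $ j)"
    using mult_mat_vec_nth_sum[OF A xc i] Ax i by simp
  then show ?thesis by (simp add: xj)
qed

definition move_to_last :: "nat \<Rightarrow> nat \<Rightarrow> nat \<Rightarrow> nat" where
  "move_to_last n j c = (if c < j then c else if c < n - 1 then Suc c else if c = n - 1 then j else c)"

lemma move_to_last_permutes:
  assumes "j < n"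
  shows "move_to_last n j permutes {0..<n}"
proof (rule bij_imp_permutes)
  have "inj_on (move_to_last n j) {0..<n}"
    unfolding inj_on_def move_to_last_def using assms by auto
  moreover have "move_to_last n j ` {0..<n} \<subseteq> {0..<n}"
    unfolding move_to_last_def using assms by auto
  ultimately show "bij_betw (move_to_last n j) {0..<n} {0..<n}"
    by (simp add: bij_betw_def endo_inj_surj)
  show "c \<notin> {0..<n} \<Longrightarrow> move_to_last n j c = c" for c
    unfolding move_to_last_def using assms by auto
qed

lemma nth_remove_snoc_map_upt:
  assumes "j < n" "c < n"
  shows "(take j (map g [0..<n]) @ drop (Suc j) (map g [0..<n]) @ [g j]) ! c = g (move_to_last n j c)"
  using assms by (auto simp: nth_append move_to_last_def take_map drop_map min_def)

section \<open>Integrals over \<open>(-\<infinity>, x]\<close>\<close>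

lemma tendsto_shift_at_bot_sequentially:
  fixes H :: "real \<Rightarrow> real"
  assumes "(H \<longlongrightarrow> 0) at_bot"
  shows "(\<lambda>n. H x - H (x - real n)) \<longlonglongrightarrow> H x"
proof -
  have "filterlim (\<lambda>n. x - real n) at_bot sequentially"
    unfolding filterlim_uminus_at_bot
    using filterlim_tendsto_add_at_top[OF tendsto_const[of "-x"] filterlim_real_sequentially]
    by simp
  then have "(\<lambda>n. H (x - real n)) \<longlonglongrightarrow> 0"
    using filterlim_compose[OF assms] by blast
  then show ?thesis using tendsto_diff[OF tendsto_const] by fastforce
qed

lemma has_integral_truncated_atMost:
  fixes g H :: "real \<Rightarrow> real"
  assumes "\<And>y. y \<le> x \<Longrightarrow> (H has_real_derivative g y) (at y)"
  shows "((\<lambda>y. if y \<in> {x - real n..x} then g y else 0) has_integral (H x - H (x - real n))) {..x}"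
proof -
  have "(g has_integral (H x - H (x - real n))) {x - real n..x}"
    using assms by (intro fundamental_theorem_of_calculus)
      (auto simp: has_real_derivative_iff_has_vector_derivative[symmetric] intro: DERIV_subset)
  then show ?thesis by (subst has_integral_restrict) auto
qed

lemma truncated_atMost_tendsto:
  "(\<lambda>n. if y \<in> {x - real n..x} then g y else 0) \<longlonglongrightarrow> g y" if "y \<in> {..x}"
proof (rule tendsto_eventually)
  obtain m :: nat where "x - y \<le> real m" using real_arch_simple by blast
  then show "\<forall>\<^sub>F n in sequentially. (if y \<in> {x - real n..x} then g y else 0) = g y"
    using that by (auto simp: eventually_sequentially intro!: exI[of _ m])
qed

lemma fundamental_theorem_of_calculus_atMost_nonneg:
  fixes g H :: "real \<Rightarrow> real"
  assumes d: "\<And>y. y \<le> x \<Longrightarrow> (H has_real_derivative g y) (at y)"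
    and nonneg: "\<And>y. y \<le> x \<Longrightarrow> g y \<ge> 0" and lim: "(H \<longlongrightarrow> 0) at_bot"
  shows "(g has_integral H x) {..x}"
proof (rule has_integral_monotone_convergence_increasing)
  show "((\<lambda>y. if y \<in> {x - real n..x} then g y else 0) has_integral (H x - H (x - real n))) {..x}" for n
    by (rule has_integral_truncated_atMost[OF d])
  show "(if y \<in> {x - real n..x} then g y else 0) \<le> (if y \<in> {x - real (Suc n)..x} then g y else 0)"
    if "y \<in> {..x}" for n y
    using that nonneg by auto
qed (rule truncated_atMost_tendsto tendsto_shift_at_bot_sequentially[OF lim] | assumption)+

lemma fundamental_theorem_of_calculus_atMost_dominated:
  fixes g H h :: "real \<Rightarrow> real"
  assumes d: "\<And>y. y \<le> x \<Longrightarrow> (H has_real_derivative g y) (at y)"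
    and bound: "\<And>y. y \<le> x \<Longrightarrow> \<bar>g y\<bar> \<le> h y" and h: "h integrable_on {..x}"
    and lim: "(H \<longlongrightarrow> 0) at_bot"
  shows "(g has_integral H x) {..x}"
proof -
  let ?g = "\<lambda>n y. if y \<in> {x - real n..x} then g y else 0"
  have int: "(?g n has_integral (H x - H (x - real n))) {..x}" for n
    by (rule has_integral_truncated_atMost[OF d])
  then have integrable: "?g n integrable_on {..x}" for n
    by blast
  have "norm (?g n y) \<le> h y" if "y \<in> {..x}" for n y
    using bound[of y] that by (auto intro: order_trans[OF _ bound[of y]])
  note dc = dominated_convergence[OF integrable h this truncated_atMost_tendsto[where x = x and g = g]]
  have "(\<lambda>n. H x - H (x - real n)) \<longlonglongrightarrow> integral {..x} g"
  proof -
    have "integral {..x} (?g n) = H x - H (x - real n)" for n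
      using int by (rule integral_unique)
    then show ?thesis using dc(2) by simp
  qed
  then have "integral {..x} g = H x"
    using LIMSEQ_unique tendsto_shift_at_bot_sequentially[OF lim] by blast
  with dc(1) int show ?thesis by (metis has_integral_integrable_integral)
qed

lemma has_integral_exp_atMost:
  fixes a b x :: real
  assumes "a > 0"
  shows "((\<lambda>y. exp (a * y + b)) has_integral exp (a * x + b) / a) {..x}"
proof (rule fundamental_theorem_of_calculus_atMost_nonneg[where H = "\<lambda>y. exp (a * y + b) / a"])
  show "((\<lambda>y. exp (a * y + b) / a) has_real_derivative exp (a * y + b)) (at y)" for y
    using assms by (auto intro!: derivative_eq_intros)
  show "((\<lambda>y. exp (a * y + b) / a) \<longlongrightarrow> 0) at_bot"
    using assms by real_asymp
qed auto

section \<open>The matrix \<open>I + (e\<^sub>i e\<^sub>j / (k\<^sub>i + k\<^sub>j))\<close>\<close>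

definition cauchy_entry :: "(nat \<Rightarrow> real) \<Rightarrow> (nat \<Rightarrow> real) \<Rightarrow> nat \<Rightarrow> nat \<Rightarrow> real" where
  "cauchy_entry k e i j = (if i = j then 1 else 0) + e i * e j / (k i + k j)"

definition cauchy_mat :: "nat \<Rightarrow> (nat \<Rightarrow> real) \<Rightarrow> (nat \<Rightarrow> real) \<Rightarrow> real mat" where
  "cauchy_mat N k e = mat N N (\<lambda>(i,j). cauchy_entry k e i j)"

definition tau :: "nat \<Rightarrow> (nat \<Rightarrow> real) \<Rightarrow> (nat \<Rightarrow> real) \<Rightarrow> real" where
  "tau N k e = det (cauchy_mat N k e)"

definition cauchy_apply :: "nat \<Rightarrow> (nat \<Rightarrow> real) \<Rightarrow> (nat \<Rightarrow> real) \<Rightarrow> (nat \<Rightarrow> real) \<Rightarrow> nat \<Rightarrow> real" where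
  "cauchy_apply N k e z r = (\<Sum>j<N. cauchy_entry k e r j * z j)"

text \<open>Cramer's rule: a solution of \<open>cauchy_apply N k e z = y\<close> whenever \<open>tau N k e \<noteq> 0\<close>,
  and junk otherwise.\<close>
definition cauchy_solve :: "nat \<Rightarrow> (nat \<Rightarrow> real) \<Rightarrow> (nat \<Rightarrow> real) \<Rightarrow> (nat \<Rightarrow> real) \<Rightarrow> nat \<Rightarrow> real" where
  "cauchy_solve N k e y i = det (replace_col (cauchy_mat N k e) (vec N y) i) / tau N k e"

lemma cauchy_mat_carrier [simp]: "cauchy_mat N k e \<in> carrier_mat N N"
  by (simp add: cauchy_mat_def)

lemma cauchy_entry_sym: "cauchy_entry k e i j = cauchy_entry k e j i"
  by (simp add: cauchy_entry_def mult_ac add.commute)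

lemma cauchy_apply_symmetric: "(\<Sum>r<N. x r * cauchy_apply N k e y r) = (\<Sum>r<N. cauchy_apply N k e x r * y r)"
  unfolding cauchy_apply_def sum_distrib_left sum_distrib_right
  by (subst sum.swap) (simp add: cauchy_entry_sym mult_ac)

lemma cauchy_apply_add: "cauchy_apply N k e (\<lambda>j. z j + z' j) r = cauchy_apply N k e z r + cauchy_apply N k e z' r"
  unfolding cauchy_apply_def by (simp add: distrib_left sum.distrib)

lemma cauchy_apply_diff: "cauchy_apply N k e (\<lambda>j. z j - z' j) r = cauchy_apply N k e z r - cauchy_apply N k e z' r"
  unfolding cauchy_apply_def by (simp add: right_diff_distrib sum_subtractf)

lemma cauchy_apply_cmult: "cauchy_apply N k e (\<lambda>j. c * z j) r = c * cauchy_apply N k e z r"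
  unfolding cauchy_apply_def by (simp add: sum_distrib_left mult_ac)

lemma cauchy_apply_expand:
  assumes "r < N"
  shows "cauchy_apply N k e z r = z r + (\<Sum>j<N. e r * e j / (k r + k j) * z j)"
proof -
  have "cauchy_entry k e r j * z j = (if r = j then z j else 0) + e r * e j / (k r + k j) * z j" for j
    by (simp add: cauchy_entry_def distrib_right)
  then show ?thesis using assms by (simp add: cauchy_apply_def sum.distrib)
qed

lemma cauchy_apply_offdiag_solution:
  assumes "r < N" and "cauchy_apply N k e \<phi> r = e r"
  shows "(\<Sum>j<N. e r * e j / (k r + k j) * \<phi> j) = e r - \<phi> r"
  using assms cauchy_apply_expand[of r N k e \<phi>] by simp

lemma cauchy_solve_cong: "(\<And>r. r < N \<Longrightarrow> y r = y' r) \<Longrightarrow> cauchy_solve N k e y = cauchy_solve N k e y'"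
  unfolding cauchy_solve_def by (metis (mono_tags, lifting) eq_vecI dim_vec index_vec)

lemma has_real_derivative_cauchy_entry:
  assumes "((\<lambda>s. e s i) has_real_derivative a i * e s0 i) (at s0)"
    and "((\<lambda>s. e s j) has_real_derivative a j * e s0 j) (at s0)"
  shows "((\<lambda>s. cauchy_entry k (e s) i j) has_real_derivative
    (a i + a j) * (e s0 i * e s0 j) / (k i + k j)) (at s0)"
proof -
  have "((\<lambda>s. e s i * e s j / (k i + k j)) has_real_derivative
      (a i * e s0 i * e s0 j + a j * e s0 j * e s0 i) / (k i + k j)) (at s0)"
    by (intro DERIV_cdivide DERIV_mult assms)
  then have "((\<lambda>s. (if i = j then 1 else 0) + e s i * e s j / (k i + k j)) has_real_derivative
      0 + (a i * e s0 i * e s0 j + a j * e s0 j * e s0 i) / (k i + k j)) (at s0)"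
    by (intro DERIV_add DERIV_const)
  then show ?thesis
    unfolding cauchy_entry_def by (simp add: algebra_simps add_divide_distrib)
qed

text \<open>From \<open>M z' = y' - M' z\<close>, when \<open>e\<^sub>j\<close> grows at rate \<open>a\<^sub>j\<close>, so that
  \<open>M' = ((a\<^sub>i + a\<^sub>j) e\<^sub>i e\<^sub>j / (k\<^sub>i + k\<^sub>j))\<close>.\<close>
definition cauchy_solve_deriv ::
    "nat \<Rightarrow> (nat \<Rightarrow> real) \<Rightarrow> (nat \<Rightarrow> real) \<Rightarrow> (nat \<Rightarrow> real) \<Rightarrow> (nat \<Rightarrow> real) \<Rightarrow> (nat \<Rightarrow> real) \<Rightarrow> nat \<Rightarrow> real"
  where "cauchy_solve_deriv N k e a y y' = cauchy_solve N k e
    (\<lambda>r. y' r - (\<Sum>j<N. (a r + a j) * (e r * e j) / (k r + k j) * cauchy_solve N k e y j))"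

text \<open>If \<open>M \<phi> = e\<close> and \<open>z\<close> is the derivative of \<open>\<phi>\<close> when \<open>e\<^sub>j\<close> grows at rate \<open>a\<^sub>j\<close>, then
  \<open>z + a \<phi>\<close> solves a Cauchy system with right-hand side \<open>2 a \<phi>\<close>.\<close>
lemma cauchy_apply_deriv_shift:
  assumes r: "r < N" and \<phi>: "cauchy_apply N k e \<phi> r = e r"
    and z: "cauchy_apply N k e z r = a r * e r - (\<Sum>j<N. (a r + a j) * (e r * e j) / (k r + k j) * \<phi> j)"
  shows "cauchy_apply N k e (\<lambda>j. z j + a j * \<phi> j) r = 2 * a r * \<phi> r"
proof -
  define T where "T = (\<Sum>j<N. e r * e j / (k r + k j) * \<phi> j)"
  define U where "U = (\<Sum>j<N. e r * e j / (k r + k j) * (a j * \<phi> j))"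
  have "(\<Sum>j<N. (a r + a j) * (e r * e j) / (k r + k j) * \<phi> j) = a r * T + U"
    unfolding T_def U_def sum_distrib_left sum.distrib[symmetric]
    by (rule sum.cong) (simp_all add: algebra_simps add_divide_distrib)
  then have "cauchy_apply N k e z r = a r * e r - a r * T - U"
    using z by simp
  moreover have "cauchy_apply N k e (\<lambda>j. a j * \<phi> j) r = a r * \<phi> r + U"
    unfolding U_def by (rule cauchy_apply_expand[OF r])
  moreover have "T = e r - \<phi> r"
    unfolding T_def by (rule cauchy_apply_offdiag_solution[OF r \<phi>])
  ultimately show ?thesis
    by (simp add: cauchy_apply_add algebra_simps)
qed

lemma sum_deriv_e_mult_solution:
  assumes \<phi>: "\<And>r. r < N \<Longrightarrow> cauchy_apply N k e \<phi> r = e r"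
    and z: "\<And>r. r < N \<Longrightarrow> cauchy_apply N k e (\<lambda>j. z j + a j * \<phi> j) r = 2 * a r * \<phi> r"
  shows "(\<Sum>r<N. a r * e r * \<phi> r + e r * z r) = 2 * (\<Sum>r<N. a r * (\<phi> r)\<^sup>2)"
proof -
  let ?a\<phi> = "\<lambda>j. a j * \<phi> j"
  have z': "cauchy_apply N k e z r = 2 * a r * \<phi> r - cauchy_apply N k e ?a\<phi> r" if "r < N" for r
    using z[OF that] cauchy_apply_add[of N k e z ?a\<phi> r] by simp
  have "(\<Sum>r<N. e r * z r) = (\<Sum>r<N. \<phi> r * cauchy_apply N k e z r)"
    using cauchy_apply_symmetric[where x = \<phi> and y = z] by (simp add: \<phi>)
  also have "\<dots> = (\<Sum>r<N. \<phi> r * (2 * a r * \<phi> r)) - (\<Sum>r<N. \<phi> r * cauchy_apply N k e ?a\<phi> r)"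
    by (simp add: z' right_diff_distrib sum_subtractf)
  also have "(\<Sum>r<N. \<phi> r * cauchy_apply N k e ?a\<phi> r) = (\<Sum>r<N. a r * e r * \<phi> r)"
    using cauchy_apply_symmetric[where x = \<phi> and y = ?a\<phi>] by (simp add: \<phi> mult_ac)
  finally show ?thesis
    by (simp add: sum.distrib sum_distrib_left power2_eq_square mult_ac)
qed

lemma cauchy_derivs_symmetric:
  assumes p: "\<And>r. r < N \<Longrightarrow> cauchy_apply N k e (\<lambda>j. p j + a j * \<phi> j) r = 2 * a r * \<phi> r"
    and q: "\<And>r. r < N \<Longrightarrow> cauchy_apply N k e (\<lambda>j. q j + b j * \<phi> j) r = 2 * b r * \<phi> r"
  shows "(\<Sum>r<N. b r * \<phi> r * p r) = (\<Sum>r<N. a r * \<phi> r * q r)"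
proof -
  let ?P = "\<lambda>j. p j + a j * \<phi> j" and ?Q = "\<lambda>j. q j + b j * \<phi> j"
  have "(\<Sum>r<N. b r * \<phi> r * ?P r) = (\<Sum>r<N. cauchy_apply N k e ?Q r * ?P r) / 2"
    unfolding sum_divide_distrib by (rule sum.cong) (auto simp: q)
  also have "\<dots> = (\<Sum>r<N. ?Q r * cauchy_apply N k e ?P r) / 2"
    by (simp only: cauchy_apply_symmetric)
  also have "\<dots> = (\<Sum>r<N. a r * \<phi> r * ?Q r)"
    unfolding sum_divide_distrib by (rule sum.cong) (auto simp: p)
  finally show ?thesis
    by (simp add: distrib_left sum.distrib mult_ac)
qed

lemma bordered_cauchy_mult_vec:
  assumes j: "j < N" and z: "\<And>r. r < N \<Longrightarrow> cauchy_apply N k e z r = (if r = j then 1 else 0)"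
  shows "mat (Suc N) (Suc N) (\<lambda>(r,c). if c < N
      then (if r < N then cauchy_entry k e r c else e c) else if r = N then 1 else 0)
    *\<^sub>v vec (Suc N) (\<lambda>c. if c < N then (if c = j then 1 else 0) - z c else (\<Sum>c<N. e c * z c))
    = vec (Suc N) (\<lambda>r. if r < N then e r * e j / (k r + k j) else e j)"
    (is "?A *\<^sub>v ?v = _")
proof (rule eq_vecI)
  fix r assume "r < dim_vec (vec (Suc N) (\<lambda>r. if r < N then e r * e j / (k r + k j) else e j))"
  then have r: "r < Suc N" by simp
  have Av: "(?A *\<^sub>v ?v) $ r = (\<Sum>c<N. ?A $$ (r,c) * ?v $ c) + ?A $$ (r,N) * ?v $ N"
    using mult_mat_vec_nth_sum[of ?A "Suc N" ?v, OF _ _ r] by simp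
  show "(?A *\<^sub>v ?v) $ r = vec (Suc N) (\<lambda>r. if r < N then e r * e j / (k r + k j) else e j) $ r"
  proof (cases "r < N")
    case True
    have "cauchy_apply N k e (\<lambda>c. if c = j then 1 else 0) r = cauchy_entry k e r j"
      using j by (simp add: cauchy_apply_def if_distrib cong: if_cong)
    then have "cauchy_apply N k e (\<lambda>c. (if c = j then 1 else 0) - z c) r = cauchy_entry k e r j - (if r = j then 1 else 0)"
      using True by (simp add: cauchy_apply_diff z)
    then show ?thesis
      using Av True by (simp add: cauchy_apply_def cauchy_entry_def)
  next
    case False
    have "(\<Sum>c<N. e c * (if c = j then 1 else 0)) = e j"
      using j by (simp add: if_distrib cong: if_cong)
    then show ?thesis
      using Av False r by (simp add: right_diff_distrib sum_subtractf)
  qed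
qed (simp)

locale positive_wavenumbers =
  fixes N :: nat and k :: "nat \<Rightarrow> real"
  assumes k_pos: "\<And>j. j < N \<Longrightarrow> k j > 0"
begin

lemma sum_cauchy_displacement:
  fixes e w :: "nat \<Rightarrow> real"
  assumes r: "r < N"
  shows "(\<Sum>j<N. (k r + k j) * (e r * e j) / (k r + k j) * w j) = e r * (\<Sum>j<N. e j * w j)"
proof -
  have "(k r + k j) * (e r * e j) / (k r + k j) * w j = e r * (e j * w j)" if "j < N" for j
  proof -
    have "k r + k j \<noteq> 0" using k_pos[OF r] k_pos[OF that] by linarith
    then show ?thesis by simp
  qed
  then show ?thesis unfolding sum_distrib_left by (intro sum.cong) auto
qed

text \<open>The Cauchy matrix \<open>1 / (k i + k j)\<close> is the Gram matrix of the functions \<open>exp (k i * y)\<close>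
  in \<open>L\<^sup>2(-\<infinity>, 0]\<close>, hence positive semidefinite.\<close>
lemma cauchy_quadratic_form_nonneg:
  fixes w :: "nat \<Rightarrow> real"
  shows "(\<Sum>i<N. \<Sum>j<N. w i * w j / (k i + k j)) \<ge> 0"
proof -
  have "((\<lambda>y. \<Sum>i<N. \<Sum>j<N. w i * w j * exp ((k i + k j) * y + 0)) has_integral
        (\<Sum>i<N. \<Sum>j<N. w i * w j * (exp ((k i + k j) * 0 + 0) / (k i + k j)))) {..0}"
    by (intro has_integral_sum finite_lessThan has_integral_mult_right has_integral_exp_atMost)
      (auto intro: add_pos_pos k_pos)
  moreover have "(\<Sum>i<N. \<Sum>j<N. w i * w j * exp ((k i + k j) * y + 0)) = (\<Sum>i<N. w i * exp (k i * y))\<^sup>2" for y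
  proof -
    have "exp ((k i + k j) * y + 0) = exp (k i * y) * exp (k j * y)" for i j
      by (simp add: distrib_right exp_add)
    then show ?thesis by (simp add: power2_eq_square sum_product mult_ac)
  qed
  ultimately have "((\<lambda>y. (\<Sum>i<N. w i * exp (k i * y))\<^sup>2) has_integral
        (\<Sum>i<N. \<Sum>j<N. w i * w j / (k i + k j))) {..0}" by simp
  then show ?thesis by (rule has_integral_nonneg) auto
qed

lemma cauchy_quadratic_form_ge:
  shows "(\<Sum>r<N. z r * cauchy_apply N k e z r) \<ge> (\<Sum>r<N. (z r)\<^sup>2)"
proof -
  have "z r * cauchy_apply N k e z r =
      (z r)\<^sup>2 + (\<Sum>j<N. (z r * e r) * (z j * e j) / (k r + k j))" if "r < N" for r
    using that by (simp add: cauchy_apply_expand sum_distrib_left distrib_left power2_eq_square mult_ac)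
  then have "(\<Sum>r<N. z r * cauchy_apply N k e z r) =
      (\<Sum>r<N. (z r)\<^sup>2) + (\<Sum>i<N. \<Sum>j<N. (z i * e i) * (z j * e j) / (k i + k j))"
    by (simp add: sum.distrib)
  then show ?thesis using cauchy_quadratic_form_nonneg[where w="\<lambda>i. z i * e i"] by simp
qed

lemma cauchy_apply_sum_sq_le:
  assumes eq: "\<And>r. r < N \<Longrightarrow> cauchy_apply N k e z r = y r"
  shows "(\<Sum>r<N. (z r)\<^sup>2) \<le> (\<Sum>r<N. (y r)\<^sup>2)"
proof -
  have "(\<Sum>r<N. (z r)\<^sup>2) \<le> (\<Sum>r<N. z r * y r)"
    using cauchy_quadratic_form_ge[where z = z and e = e] by (simp add: eq)
  also have "\<dots> \<le> (\<Sum>r<N. ((z r)\<^sup>2 + (y r)\<^sup>2) / 2)"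
  proof (rule sum_mono)
    fix r
    show "z r * y r \<le> ((z r)\<^sup>2 + (y r)\<^sup>2) / 2"
      using sum_squares_bound[of "z r" "y r"] by simp
  qed
  also have "\<dots> = (\<Sum>r<N. (z r)\<^sup>2) / 2 + (\<Sum>r<N. (y r)\<^sup>2) / 2"
    by (simp add: sum.distrib sum_divide_distrib add_divide_distrib)
  finally show ?thesis by simp
qed

lemma cauchy_apply_injective:
  assumes eq: "\<And>r. r < N \<Longrightarrow> cauchy_apply N k e z r = cauchy_apply N k e z' r"
    and j: "j < N"
  shows "z j = z' j"
proof -
  have "(\<Sum>r<N. (z r - z' r)\<^sup>2) \<le> (\<Sum>r<N. (0::real)\<^sup>2)"
  proof (rule cauchy_apply_sum_sq_le[where e = e])
    fix r assume "r < N"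
    then show "cauchy_apply N k e (\<lambda>r. z r - z' r) r = 0"
      using cauchy_apply_diff[of N k e z z' r] eq by simp
  qed
  then have "(\<Sum>r<N. (z r - z' r)\<^sup>2) = 0"
    using sum_nonneg[of "{..<N}" "\<lambda>r. (z r - z' r)\<^sup>2"] by simp
  then show ?thesis using j by (subst (asm) sum_nonneg_eq_0_iff) auto
qed

lemma tau_nonzero:
  shows "tau N k e \<noteq> 0"
proof
  assume "tau N k e = 0"
  then obtain v where v: "v \<in> carrier_vec N" "v \<noteq> 0\<^sub>v N" "cauchy_mat N k e *\<^sub>v v = 0\<^sub>v N"
    unfolding tau_def using det_0_iff_vec_prod_zero[OF cauchy_mat_carrier] by blast
  have "cauchy_apply N k e (\<lambda>j. v $ j) r = cauchy_apply N k e (\<lambda>_. 0) r" if "r < N" for r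
  proof -
    have "cauchy_apply N k e (\<lambda>j. v $ j) r = (cauchy_mat N k e *\<^sub>v v) $ r"
      using mult_mat_vec_nth_sum[OF cauchy_mat_carrier v(1) that] that
      by (simp add: cauchy_apply_def cauchy_mat_def)
    then show ?thesis using v(3) that by (simp add: cauchy_apply_def)
  qed
  then have "v $ j = 0" if "j < N" for j
    using cauchy_apply_injective[OF _ that] by blast
  then have "v = 0\<^sub>v N" using v(1) by (intro eq_vecI) auto
  with v(2) show False by simp
qed

text \<open>Deform the matrix to the identity along \<open>e \<mapsto> sqrt s * e\<close>: its determinant never
  vanishes and starts at 1.\<close>
lemma tau_pos:
  shows "tau N k e > 0"
proof (rule ccontr)
  assume neg: "\<not> tau N k e > 0"
  define c where "c i j = e i * e j / (k i + k j)" for i j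
  define g where "g s = det (mat N N (\<lambda>(i,j). (if i = j then 1 else 0) + s * c i j))" for s
  have g_tau: "g s = tau N k (\<lambda>i. sqrt s * e i)" if "s \<ge> 0" for s
  proof -
    have eq: "s * (e i * e j / (k i + k j)) = sqrt s * e i * (sqrt s * e j) / (k i + k j)" for i j
      using that by (simp add: mult_ac real_sqrt_mult_self)
    show ?thesis unfolding g_def c_def tau_def cauchy_mat_def cauchy_entry_def eq ..
  qed
  have "g 0 = det (1\<^sub>m N :: real mat)"
    unfolding g_def by (intro arg_cong[where f = det] eq_matI) auto
  then have g0: "g 0 = 1" by simp
  have "isCont g s" for s
    unfolding g_def
    by (rule DERIV_isCont, rule has_field_derivative_det_mat
        [where A = "\<lambda>i j s. (if i = j then 1 else 0) + s * c i j" and A' = c])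
      (auto intro!: derivative_eq_intros)
  then obtain s where "0 \<le> s" "g s = 0"
    using IVT2[of g 1 0 0] g0 g_tau[of 1] neg by auto
  then show False using g_tau[of s] tau_nonzero by simp
qed

lemma cauchy_apply_solve:
  assumes r: "r < N"
  shows "cauchy_apply N k e (cauchy_solve N k e y) r = y r"
  using cramer_rule_solves[OF cauchy_mat_carrier tau_nonzero[unfolded tau_def] r, where y = y] r
  by (simp add: cauchy_apply_def cauchy_solve_def tau_def cauchy_mat_def)

lemma cauchy_solve_differentiable:
  assumes e: "\<And>j. j < N \<Longrightarrow> ((\<lambda>s. e s j) has_real_derivative a j * e s0 j) (at s0)"
    and y: "\<And>j. j < N \<Longrightarrow> ((\<lambda>s. y s j) has_real_derivative y' j) (at s0)"
  shows "\<exists>D. ((\<lambda>s. cauchy_solve N k (e s) (y s) i) has_real_derivative D) (at s0)"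
proof -
  have "\<exists>D. ((\<lambda>s. det (mat N N (\<lambda>(r,c). if c = i then y s r else cauchy_entry k (e s) r c)))
      has_real_derivative D) (at s0)"
    by (rule exI, rule has_field_derivative_det_mat[where A' = "\<lambda>r c. if c = i then y' r
        else (a r + a c) * (e s0 r * e s0 c) / (k r + k c)"])
      (auto simp: y intro: has_real_derivative_cauchy_entry[OF e e])
  moreover have "replace_col (cauchy_mat N k (e s)) (vec N (y s)) i
      = mat N N (\<lambda>(r,c). if c = i then y s r else cauchy_entry k (e s) r c)" for s
    by (rule eq_matI) (auto simp: replace_col_def cauchy_mat_def)
  ultimately obtain D1 where D1: "((\<lambda>s. det (replace_col (cauchy_mat N k (e s)) (vec N (y s)) i))
      has_real_derivative D1) (at s0)"
    by auto
  have "\<exists>D. ((\<lambda>s. tau N k (e s)) has_real_derivative D) (at s0)"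
    unfolding tau_def cauchy_mat_def
    by (rule exI, rule has_field_derivative_det_mat[where A' = "\<lambda>r c. (a r + a c) * (e s0 r * e s0 c) / (k r + k c)"])
      (auto intro: has_real_derivative_cauchy_entry[OF e e])
  then obtain D2 where D2: "((\<lambda>s. tau N k (e s)) has_real_derivative D2) (at s0)"
    by blast
  show ?thesis
    unfolding cauchy_solve_def using DERIV_divide[OF D1 D2 tau_nonzero] by blast
qed

lemma has_real_derivative_cauchy_solve:
  assumes e: "\<And>j. j < N \<Longrightarrow> ((\<lambda>s. e s j) has_real_derivative a j * e s0 j) (at s0)"
    and y: "\<And>j. j < N \<Longrightarrow> ((\<lambda>s. y s j) has_real_derivative y' j) (at s0)"
    and i: "i < N"
  shows "((\<lambda>s. cauchy_solve N k (e s) (y s) i) has_real_derivative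
    cauchy_solve_deriv N k (e s0) a (y s0) y' i) (at s0)"
proof -
  define z where "z s = cauchy_solve N k (e s) (y s)" for s
  have "\<forall>j. \<exists>D. j < N \<longrightarrow> ((\<lambda>s. z s j) has_real_derivative D) (at s0)"
    unfolding z_def using cauchy_solve_differentiable[where e = e and y = y, OF e y] by blast
  then obtain z' where z': "\<And>j. j < N \<Longrightarrow> ((\<lambda>s. z s j) has_real_derivative z' j) (at s0)"
    by metis
  have z'_eq: "cauchy_apply N k (e s0) z' r
      = y' r - (\<Sum>j<N. (a r + a j) * (e s0 r * e s0 j) / (k r + k j) * z s0 j)" if r: "r < N" for r
  proof -
    have "((\<lambda>s. cauchy_apply N k (e s) (z s) r) has_real_derivative
        (\<Sum>j<N. (a r + a j) * (e s0 r * e s0 j) / (k r + k j) * z s0 j + z' j * cauchy_entry k (e s0) r j)) (at s0)"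
      unfolding cauchy_apply_def
      by (rule DERIV_sum, rule DERIV_mult[OF has_real_derivative_cauchy_entry[where e = e and a = a and k = k, OF e[OF r] e] z']) auto
    moreover have "cauchy_apply N k (e s) (z s) r = y s r" for s
      unfolding z_def using cauchy_apply_solve[OF r] .
    ultimately have "((\<lambda>s. y s r) has_real_derivative
        (\<Sum>j<N. (a r + a j) * (e s0 r * e s0 j) / (k r + k j) * z s0 j + z' j * cauchy_entry k (e s0) r j)) (at s0)"
      by simp
    from DERIV_unique[OF this y[OF r]] show ?thesis
      unfolding cauchy_apply_def sum.distrib by (simp add: mult.commute)
  qed
  have "z' i = cauchy_solve_deriv N k (e s0) a (y s0) y' i"
  proof (rule cauchy_apply_injective[OF _ i])
    fix r assume r: "r < N"
    show "cauchy_apply N k (e s0) z' r = cauchy_apply N k (e s0) (cauchy_solve_deriv N k (e s0) a (y s0) y') r"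
      unfolding cauchy_solve_deriv_def cauchy_apply_solve[OF r] z'_eq[OF r] z_def ..
  qed
  with z'[OF i] show ?thesis unfolding z_def by simp
qed

lemma det_cauchy_row_replaced:
  assumes j: "j < N"
  shows "det (mat N N (\<lambda>(r,c). if r = j then e c else cauchy_entry k e r c)) = tau N k e * cauchy_solve N k e e j"
proof -
  define A where "A = mat N N (\<lambda>(r,c). if r = j then e c else cauchy_entry k e r c)"
  have "det A = det (transpose_mat A)"
    by (rule det_transpose[of A N, symmetric]) (simp add: A_def)
  also have "transpose_mat A = replace_col (cauchy_mat N k e) (vec N e) j"
    by (rule eq_matI) (auto simp: A_def replace_col_def cauchy_mat_def cauchy_entry_sym)
  finally show ?thesis
    using tau_nonzero by (simp add: A_def cauchy_solve_def)
qed

text \<open>With \<open>e\<^sub>j' = k\<^sub>j e\<^sub>j\<close> the derivative of \<open>M\<^sub>r\<^sub>c\<close> is \<open>e\<^sub>r e\<^sub>c\<close>: differentiating row \<open>r\<close> gives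
  \<open>e\<^sub>r\<close> times the row \<open>e\<close>, a Cramer numerator.\<close>
lemma has_real_derivative_tau:
  assumes e: "\<And>j. j < N \<Longrightarrow> ((\<lambda>s. e s j) has_real_derivative k j * e s0 j) (at s0)"
  shows "((\<lambda>s. tau N k (e s)) has_real_derivative
    tau N k (e s0) * (\<Sum>r<N. e s0 r * cauchy_solve N k (e s0) (e s0) r)) (at s0)"
proof -
  have "((\<lambda>s. cauchy_entry k (e s) i c) has_real_derivative e s0 i * e s0 c) (at s0)"
    if "i < N" "c < N" for i c
  proof -
    have "k i + k c \<noteq> 0" using k_pos[OF that(1)] k_pos[OF that(2)] by linarith
    then show ?thesis
      using has_real_derivative_cauchy_entry[where e = e and k = k, OF e[OF that(1)] e[OF that(2)]] by simp
  qed
  then have "((\<lambda>s. tau N k (e s)) has_real_derivative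
      (\<Sum>r<N. det (mat N N (\<lambda>(i,c). if i = r then e s0 i * e s0 c else cauchy_entry k (e s0) i c)))) (at s0)"
    unfolding tau_def cauchy_mat_def
    by (intro has_field_derivative_det_mat)
  also have "det (mat N N (\<lambda>(i,c). if i = r then e s0 i * e s0 c else cauchy_entry k (e s0) i c))
      = e s0 r * (tau N k (e s0) * cauchy_solve N k (e s0) (e s0) r)" if r: "r < N" for r
  proof -
    have "mat N N (\<lambda>(i,c). if i = r then e s0 i * e s0 c else cauchy_entry k (e s0) i c)
      = multrow r (e s0 r) (mat N N (\<lambda>(i,c). if i = r then e s0 c else cauchy_entry k (e s0) i c))"
      by (rule eq_matI) (auto simp: mat_multrow_def)
    then show ?thesis
      by (simp add: det_multrow[OF r] det_cauchy_row_replaced[OF r])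
  qed
  then have "(\<Sum>r<N. det (mat N N (\<lambda>(i,c). if i = r then e s0 i * e s0 c else cauchy_entry k (e s0) i c)))
      = tau N k (e s0) * (\<Sum>r<N. e s0 r * cauchy_solve N k (e s0) (e s0) r)"
    by (simp add: sum_distrib_left mult_ac)
  finally show ?thesis .
qed

lemma cauchy_apply_ksq_mult_solution:
  assumes r: "r < N" and \<phi>: "cauchy_apply N k e \<phi> r = e r"
  shows "cauchy_apply N k e (\<lambda>j. (k j)\<^sup>2 * \<phi> j) r
    = (k r)\<^sup>2 * e r - k r * e r * (\<Sum>j<N. e j * \<phi> j) + e r * (\<Sum>j<N. k j * e j * \<phi> j)"
proof -
  have split: "e r * e j / (k r + k j) * ((k j)\<^sup>2 * \<phi> j)
      = e r * (k j * e j * \<phi> j) - k r * e r * (e j * \<phi> j) + (k r)\<^sup>2 * (e r * e j / (k r + k j) * \<phi> j)"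
    if "j < N" for j
  proof -
    have "k r + k j \<noteq> 0" using k_pos[OF r] k_pos[OF that] by linarith
    moreover have "(k j)\<^sup>2 = (k j - k r) * (k r + k j) + (k r)\<^sup>2"
      by (simp add: power2_eq_square algebra_simps)
    ultimately show ?thesis by (simp add: field_simps power2_eq_square)
  qed
  have "(\<Sum>j<N. e r * e j / (k r + k j) * ((k j)\<^sup>2 * \<phi> j))
      = e r * (\<Sum>j<N. k j * e j * \<phi> j) - k r * e r * (\<Sum>j<N. e j * \<phi> j)
        + (k r)\<^sup>2 * (\<Sum>j<N. e r * e j / (k r + k j) * \<phi> j)"
    unfolding sum_distrib_left sum_subtractf[symmetric] sum.distrib[symmetric]
    by (rule sum.cong[OF refl], rule split) simp
  then show ?thesis
    unfolding cauchy_apply_expand[OF r] cauchy_apply_offdiag_solution[OF r \<phi>] by (simp add: algebra_simps)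
qed

lemma det_cauchy_bordered:
  assumes j: "j < N"
  shows "det (mat (Suc N) (Suc N) (\<lambda>(r,c). if r < N
      then (if c < N then cauchy_entry k e r c else e r * e j / (k r + k j))
      else (if c < N then e c else e j)))
    = tau N k e * cauchy_solve N k e e j"
proof -
  define z where "z = cauchy_solve N k e (\<lambda>c. if c = j then 1 else 0)"
  define A where "A = mat (Suc N) (Suc N) (\<lambda>(r,c). if c < N
    then (if r < N then cauchy_entry k e r c else e c) else if r = N then 1 else 0)"
  define v where "v = vec (Suc N) (\<lambda>c. if c < N then (if c = j then 1 else 0) - z c else (\<Sum>c<N. e c * z c))"
  have A: "A \<in> carrier_mat (Suc N) (Suc N)" and v: "v \<in> carrier_vec (Suc N)"
    by (simp_all add: A_def v_def)
  have z: "cauchy_apply N k e z r = (if r = j then 1 else 0)" if "r < N" for r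
    using that by (simp add: z_def cauchy_apply_solve)
  have "A *\<^sub>v v = vec (Suc N) (\<lambda>r. if r < N then e r * e j / (k r + k j) else e j)"
    unfolding A_def v_def by (rule bordered_cauchy_mult_vec[OF j z])
  then have "det (mat (Suc N) (Suc N) (\<lambda>(r,c). if r < N
      then (if c < N then cauchy_entry k e r c else e r * e j / (k r + k j))
      else (if c < N then e c else e j))) = det (replace_col A (A *\<^sub>v v) N)"
    by (intro arg_cong[where f = det] eq_matI) (auto simp: A_def replace_col_def)
  also have "\<dots> = v $ N * det A"
    by (rule cramer_lemma_mat[OF A v]) simp
  also have "det A = tau N k e"
    unfolding A_def tau_def cauchy_mat_def
    by (subst det_mat_last_column_unit[where B = "\<lambda>r c. if r < N then cauchy_entry k e r c else e c"])
      (auto intro!: arg_cong[where f = det] eq_matI)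
  also have "v $ N = cauchy_solve N k e e j"
  proof -
    have "v $ N = (\<Sum>c<N. cauchy_apply N k e (cauchy_solve N k e e) c * z c)"
      by (simp add: v_def cauchy_apply_solve)
    also have "\<dots> = (\<Sum>c<N. cauchy_solve N k e e c * (if c = j then 1 else 0))"
      by (simp add: cauchy_apply_symmetric[symmetric] z)
    finally show ?thesis
      using j by (simp add: if_distrib cong: if_cong)
  qed
  finally show ?thesis by simp
qed

end

section \<open>The \<open>N\<close>-soliton\<close>

lemma mult_power_minus_square: "(a::'a::comm_ring_1) * (- a\<^sup>2) ^ n = (- 1) ^ n * a ^ (2 * n + 1)"
  by (simp add: power_minus[of "a\<^sup>2"] power_mult[symmetric] mult_ac)

locale n_soliton = positive_wavenumbers +
  fixes \<omega> x0 :: "nat \<Rightarrow> real"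
begin

definition f :: "nat \<Rightarrow> real \<Rightarrow> real \<Rightarrow> real" where
  "f j x t = exp (k j * x + \<omega> j * t + x0 j)"

definition fvec :: "real \<Rightarrow> real \<Rightarrow> nat \<Rightarrow> real" where
  "fvec x t j = f j x t"

definition phi :: "nat \<Rightarrow> real \<Rightarrow> real \<Rightarrow> real" where
  "phi i x t = cauchy_solve N k (fvec x t) (fvec x t) i"

definition phi_x :: "nat \<Rightarrow> real \<Rightarrow> real \<Rightarrow> real" where
  "phi_x i x t = cauchy_solve_deriv N k (fvec x t) k (fvec x t) (\<lambda>j. k j * fvec x t j) i"

definition phi_t :: "nat \<Rightarrow> real \<Rightarrow> real \<Rightarrow> real" where
  "phi_t i x t = cauchy_solve_deriv N k (fvec x t) \<omega> (fvec x t) (\<lambda>j. \<omega> j * fvec x t j) i"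

definition S :: "real \<Rightarrow> real \<Rightarrow> real" where
  "S x t = (\<Sum>j<N. f j x t * phi j x t)"

text \<open>The closed form of \<open>2 (ln \<tau>)\<^sub>x\<^sub>x\<close>, see \<open>u_eq_dx_dx_ln_W1\<close>.\<close>
definition u :: "real \<Rightarrow> real \<Rightarrow> real" where
  "u x t = 4 * (\<Sum>j<N. k j * (phi j x t)\<^sup>2)"

definition u_x :: "real \<Rightarrow> real \<Rightarrow> real" where
  "u_x x t = 8 * (\<Sum>j<N. k j * phi j x t * phi_x j x t)"

lemma fvec_has_derivative_x: "((\<lambda>y. fvec y t j) has_real_derivative k j * fvec x t j) (at x)"
  unfolding fvec_def f_def by (auto intro!: derivative_eq_intros)

lemma fvec_has_derivative_t: "((\<lambda>s. fvec x s j) has_real_derivative \<omega> j * fvec x t j) (at t)"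
  unfolding fvec_def f_def by (auto intro!: derivative_eq_intros)

lemma f_has_derivative_x: "((\<lambda>y. f j y t) has_real_derivative k j * f j x t) (at x)"
  unfolding f_def by (auto intro!: derivative_eq_intros)

lemma phi_has_derivative_x: "i < N \<Longrightarrow> ((\<lambda>y. phi i y t) has_real_derivative phi_x i x t) (at x)"
  unfolding phi_def phi_x_def
  by (rule has_real_derivative_cauchy_solve[where e = "\<lambda>y. fvec y t"]) (rule fvec_has_derivative_x)+

lemma phi_has_derivative_t: "i < N \<Longrightarrow> ((\<lambda>s. phi i x s) has_real_derivative phi_t i x t) (at t)"
  unfolding phi_def phi_t_def
  by (rule has_real_derivative_cauchy_solve[where e = "\<lambda>s. fvec x s"]) (rule fvec_has_derivative_t)+

lemma cauchy_apply_phi: "r < N \<Longrightarrow> cauchy_apply N k (fvec x t) (\<lambda>j. phi j x t) r = f r x t"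
  unfolding phi_def by (simp add: cauchy_apply_solve fvec_def)

lemma cauchy_apply_phi_x_shift:
  "r < N \<Longrightarrow> cauchy_apply N k (fvec x t) (\<lambda>j. phi_x j x t + k j * phi j x t) r = 2 * k r * phi r x t"
  by (rule cauchy_apply_deriv_shift)
    (simp_all add: cauchy_apply_phi phi_x_def cauchy_solve_deriv_def cauchy_apply_solve phi_def fvec_def)

lemma cauchy_apply_phi_t_shift:
  "r < N \<Longrightarrow> cauchy_apply N k (fvec x t) (\<lambda>j. phi_t j x t + \<omega> j * phi j x t) r = 2 * \<omega> r * phi r x t"
  by (rule cauchy_apply_deriv_shift)
    (simp_all add: cauchy_apply_phi phi_t_def cauchy_solve_deriv_def cauchy_apply_solve phi_def fvec_def)

lemma sum_f_phi_x: "(\<Sum>j<N. f j x t * phi_x j x t) = u x t / 2 - (\<Sum>j<N. k j * f j x t * phi j x t)"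
  using sum_deriv_e_mult_solution[OF cauchy_apply_phi[unfolded fvec_def[symmetric]] cauchy_apply_phi_x_shift, of x t]
  by (simp add: u_def sum.distrib fvec_def)

lemma S_has_derivative_x: "((\<lambda>y. S y t) has_real_derivative u x t / 2) (at x)"
proof -
  have "((\<lambda>y. S y t) has_real_derivative (\<Sum>j<N. k j * f j x t * phi j x t + f j x t * phi_x j x t)) (at x)"
    unfolding S_def
    by (rule DERIV_sum) (auto intro!: derivative_eq_intros f_has_derivative_x phi_has_derivative_x)
  then show ?thesis
    by (simp add: sum.distrib sum_f_phi_x)
qed

lemma tau_has_derivative_x: "((\<lambda>y. tau N k (fvec y t)) has_real_derivative tau N k (fvec x t) * S x t) (at x)"
  unfolding S_def phi_def
  using has_real_derivative_tau[where e = "\<lambda>y. fvec y t", OF fvec_has_derivative_x] by (simp add: fvec_def)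

lemma ln_tau_has_derivative_x: "((\<lambda>y. ln (tau N k (fvec y t))) has_real_derivative S x t) (at x)"
  using DERIV_chain2[OF DERIV_ln_divide tau_has_derivative_x] tau_pos tau_nonzero by simp

lemma phi_x_eq: "phi_x i x t = cauchy_solve N k (fvec x t) (\<lambda>r. k r * fvec x t r - fvec x t r * S x t) i"
  unfolding phi_x_def cauchy_solve_deriv_def
proof (rule arg_cong[where f = "\<lambda>g. g i"], rule cauchy_solve_cong)
  fix r assume "r < N"
  then show "k r * fvec x t r - (\<Sum>j<N. (k r + k j) * (fvec x t r * fvec x t j) / (k r + k j) * cauchy_solve N k (fvec x t) (fvec x t) j)
      = k r * fvec x t r - fvec x t r * S x t"
    by (simp only: sum_cauchy_displacement) (simp add: S_def phi_def fvec_def)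
qed

lemma phi_x_has_derivative_x:
  assumes i: "i < N"
  shows "((\<lambda>y. phi_x i y t) has_real_derivative ((k i)\<^sup>2 - u x t) * phi i x t) (at x)"
proof -
  define y where "y x = (\<lambda>r. k r * fvec x t r - fvec x t r * S x t)" for x
  define y' where "y' r = k r * (k r * fvec x t r) - (k r * fvec x t r * S x t + fvec x t r * (u x t / 2))" for r
  have "((\<lambda>x. y x r) has_real_derivative y' r) (at x)" for r
    unfolding y_def y'_def by (auto intro!: derivative_eq_intros fvec_has_derivative_x S_has_derivative_x)
  from has_real_derivative_cauchy_solve[where e = "\<lambda>y. fvec y t" and y = y and y' = y' and a = k,
      OF fvec_has_derivative_x this i]
  have "((\<lambda>x. phi_x i x t) has_real_derivative cauchy_solve_deriv N k (fvec x t) k (y x) y' i) (at x)"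
    by (simp add: phi_x_eq y_def)
  also have "cauchy_solve_deriv N k (fvec x t) k (y x) y' i = ((k i)\<^sup>2 - u x t) * phi i x t"
  proof (rule cauchy_apply_injective[OF _ i])
    fix r assume r: "r < N"
    have "cauchy_apply N k (fvec x t) (cauchy_solve_deriv N k (fvec x t) k (y x) y') r
        = y' r - (\<Sum>j<N. (k r + k j) * (fvec x t r * fvec x t j) / (k r + k j) * phi_x j x t)"
      by (simp add: cauchy_solve_deriv_def cauchy_apply_solve[OF r] phi_x_eq y_def fvec_def)
    also have "\<dots> = y' r - f r x t * (u x t / 2 - (\<Sum>j<N. k j * f j x t * phi j x t))"
      by (simp only: sum_cauchy_displacement[OF r, where e = "fvec x t"]) (simp add: sum_f_phi_x fvec_def)
    also have "\<dots> = cauchy_apply N k (fvec x t) (\<lambda>j. (k j)\<^sup>2 * phi j x t) r - u x t * f r x t"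
      using cauchy_apply_ksq_mult_solution[OF r cauchy_apply_phi[OF r, unfolded fvec_def[symmetric]]]
      by (simp add: y'_def S_def fvec_def algebra_simps power2_eq_square)
    also have "\<dots> = cauchy_apply N k (fvec x t) (\<lambda>j. ((k j)\<^sup>2 - u x t) * phi j x t) r"
      by (simp add: left_diff_distrib cauchy_apply_diff cauchy_apply_cmult cauchy_apply_phi[OF r])
    finally show "cauchy_apply N k (fvec x t) (cauchy_solve_deriv N k (fvec x t) k (y x) y') r
        = cauchy_apply N k (fvec x t) (\<lambda>j. ((k j)\<^sup>2 - u x t) * phi j x t) r" .
  qed
  finally show ?thesis .
qed

lemma u_has_derivative_x: "((\<lambda>y. u y t) has_real_derivative u_x x t) (at x)"
proof -
  have "((\<lambda>y. u y t) has_real_derivative 4 * (\<Sum>j<N. k j * (2 * phi j x t * phi_x j x t))) (at x)"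
    unfolding u_def by (intro DERIV_cmult DERIV_sum) (auto intro!: derivative_eq_intros phi_has_derivative_x)
  then show ?thesis by (simp add: u_x_def sum_distrib_left mult_ac)
qed

text \<open>The symmetry of the Cauchy matrix lets the \<open>t\<close>- and \<open>x\<close>-derivatives trade places.\<close>
lemma u_has_derivative_t:
  "((\<lambda>s. u x s) has_real_derivative 8 * (\<Sum>j<N. \<omega> j * phi j x t * phi_x j x t)) (at t)"
proof -
  have "((\<lambda>s. u x s) has_real_derivative 4 * (\<Sum>j<N. k j * (2 * phi j x t * phi_t j x t))) (at t)"
    unfolding u_def by (intro DERIV_cmult DERIV_sum) (auto intro!: derivative_eq_intros phi_has_derivative_t)
  then have "((\<lambda>s. u x s) has_real_derivative 8 * (\<Sum>j<N. k j * phi j x t * phi_t j x t)) (at t)"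
    by (simp add: sum_distrib_left mult_ac)
  moreover have "(\<Sum>j<N. k j * phi j x t * phi_t j x t) = (\<Sum>j<N. \<omega> j * phi j x t * phi_x j x t)"
    by (rule cauchy_derivs_symmetric[OF cauchy_apply_phi_t_shift cauchy_apply_phi_x_shift])
  ultimately show ?thesis by simp
qed

section \<open>Decay at \<open>-\<infinity>\<close>\<close>

text \<open>Everything below is \<open>O(E)\<close> as \<open>x \<rightarrow> -\<infinity>\<close>, which gives integrability on \<open>(-\<infinity>, x]\<close>
  and vanishing boundary terms.\<close>
definition E :: "real \<Rightarrow> real \<Rightarrow> real" where
  "E x t = (\<Sum>j<N. (f j x t)\<^sup>2)"

definition ksum :: real where
  "ksum = (\<Sum>j<N. k j)"

lemma dx_u: "dx u x t = u_x x t"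
  unfolding dx_def by (rule DERIV_imp_deriv[OF u_has_derivative_x])

lemma k_le_ksum: "i < N \<Longrightarrow> k i \<le> ksum"
  unfolding ksum_def by (rule member_le_sum) (auto intro: less_imp_le k_pos)

lemma ksum_nonneg: "ksum \<ge> 0"
  unfolding ksum_def by (rule sum_nonneg) (auto intro: less_imp_le k_pos)

lemma sq_k_le_sq_ksum: "i < N \<Longrightarrow> (k i)\<^sup>2 \<le> ksum\<^sup>2"
  using k_le_ksum k_pos by (intro power_mono) (auto intro: less_imp_le)

lemma E_nonneg: "E x t \<ge> 0"
  unfolding E_def by (simp add: sum_nonneg)

lemma E_mono: "y \<le> x \<Longrightarrow> E y t \<le> E x t"
  unfolding E_def f_def
  by (intro sum_mono power_mono) (auto intro: mult_left_mono less_imp_le k_pos)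

lemma f_sq: "(f j x t)\<^sup>2 = exp (2 * k j * x + 2 * (\<omega> j * t + x0 j))"
  unfolding f_def by (simp add: power2_eq_square exp_add[symmetric] algebra_simps)

lemma E_has_integral:
  "((\<lambda>y. E y t) has_integral (\<Sum>j<N. exp (2 * k j * x + 2 * (\<omega> j * t + x0 j)) / (2 * k j))) {..x}"
  unfolding E_def f_sq by (auto intro!: has_integral_sum has_integral_exp_atMost k_pos)

lemma E_integrable: "(\<lambda>y. c * E y t) integrable_on {..x}"
  using has_integral_mult_right[OF E_has_integral] by blast

lemma E_tendsto_zero: "((\<lambda>y. E y t) \<longlongrightarrow> 0) at_bot"
proof -
  have "((\<lambda>y. (f j y t)\<^sup>2) \<longlongrightarrow> 0) at_bot" if "j < N" for j
  proof -
    have "2 * k j > 0" using k_pos[OF that] by simp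
    then show ?thesis unfolding f_sq by real_asymp
  qed
  then show ?thesis
    unfolding E_def by (intro tendsto_null_sum) auto
qed

lemma tendsto_at_bot_zero_if_le_E:
  assumes "\<And>y. y \<le> x \<Longrightarrow> \<bar>g y\<bar> \<le> c * E y t"
  shows "(g \<longlongrightarrow> 0) at_bot"
proof (rule Lim_null_comparison)
  show "\<forall>\<^sub>F y in at_bot. norm (g y) \<le> c * E y t"
    using assms by (auto simp: eventually_at_bot_linorder)
  show "((\<lambda>y. c * E y t) \<longlongrightarrow> 0) at_bot"
    using tendsto_mult_right_zero[OF E_tendsto_zero] by simp
qed

lemma sum_phi_sq_le: "(\<Sum>j<N. (phi j x t)\<^sup>2) \<le> E x t"
  unfolding E_def using cauchy_apply_sum_sq_le[OF cauchy_apply_phi] .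

lemma phi_sq_le: "i < N \<Longrightarrow> (phi i x t)\<^sup>2 \<le> E x t"
  using sum_phi_sq_le[of x t] member_le_sum[of i "{..<N}" "\<lambda>j. (phi j x t)\<^sup>2"] by auto

lemma k_phi_sq_le: "i < N \<Longrightarrow> (k i * phi i x t)\<^sup>2 \<le> ksum\<^sup>2 * E x t"
  unfolding power_mult_distrib by (intro mult_mono sq_k_le_sq_ksum phi_sq_le) auto

lemma phi_x_sq_le:
  assumes i: "i < N"
  shows "(phi_x i x t)\<^sup>2 \<le> 10 * ksum\<^sup>2 * E x t"
proof -
  define w where "w j = phi_x j x t + k j * phi j x t" for j
  have "(\<Sum>j<N. (w j)\<^sup>2) \<le> (\<Sum>j<N. (2 * (k j * phi j x t))\<^sup>2)"
    unfolding w_def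
    by (rule cauchy_apply_sum_sq_le[where e = "fvec x t"]) (simp add: cauchy_apply_phi_x_shift mult.assoc)
  also have "\<dots> \<le> (\<Sum>j<N. 4 * ksum\<^sup>2 * (phi j x t)\<^sup>2)"
  proof (rule sum_mono)
    fix j assume "j \<in> {..<N}"
    then have "(k j)\<^sup>2 * (phi j x t)\<^sup>2 \<le> ksum\<^sup>2 * (phi j x t)\<^sup>2"
      by (intro mult_right_mono sq_k_le_sq_ksum) auto
    then show "(2 * (k j * phi j x t))\<^sup>2 \<le> 4 * ksum\<^sup>2 * (phi j x t)\<^sup>2"
      by (simp add: power_mult_distrib)
  qed
  also have "\<dots> \<le> 4 * ksum\<^sup>2 * E x t"
    unfolding sum_distrib_left[symmetric] by (intro mult_left_mono sum_phi_sq_le) simp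
  finally have "(w i)\<^sup>2 \<le> 4 * ksum\<^sup>2 * E x t"
    using member_le_sum[of i "{..<N}" "\<lambda>j. (w j)\<^sup>2"] i by auto
  moreover have "(phi_x i x t)\<^sup>2 \<le> 2 * (w i)\<^sup>2 + 2 * (k i * phi i x t)\<^sup>2"
    using zero_le_square[of "phi_x i x t + 2 * k i * phi i x t"]
    by (simp add: w_def power2_eq_square algebra_simps)
  ultimately show ?thesis
    using k_phi_sq_le[OF i, of x t] by linarith
qed

lemma abs_u_le: "\<bar>u x t\<bar> \<le> 4 * ksum * E x t"
proof -
  have "0 \<le> u x t"
    unfolding u_def by (intro mult_nonneg_nonneg sum_nonneg) (auto intro: less_imp_le k_pos)
  moreover have "(\<Sum>j<N. k j * (phi j x t)\<^sup>2) \<le> (\<Sum>j<N. ksum * (phi j x t)\<^sup>2)"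
    by (intro sum_mono mult_right_mono k_le_ksum) auto
  moreover have "(\<Sum>j<N. ksum * (phi j x t)\<^sup>2) \<le> ksum * E x t"
    unfolding sum_distrib_left[symmetric] by (rule mult_left_mono[OF sum_phi_sq_le ksum_nonneg])
  ultimately show ?thesis
    unfolding u_def by simp
qed

lemma abs_u_x_le: "\<bar>u_x x t\<bar> \<le> 4 * N * ksum * (1 + 10 * ksum\<^sup>2) * E x t"
proof -
  have "\<bar>k j * phi j x t * phi_x j x t\<bar> \<le> ksum * ((1 + 10 * ksum\<^sup>2) * E x t / 2)" if j: "j < N" for j
  proof -
    have "\<bar>phi j x t * phi_x j x t\<bar> \<le> ((phi j x t)\<^sup>2 + (phi_x j x t)\<^sup>2) / 2"
      using sum_squares_bound[of "phi j x t" "phi_x j x t"]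
        sum_squares_bound[of "phi j x t" "- phi_x j x t"]
      unfolding abs_le_iff by simp
    also have "\<dots> \<le> (1 + 10 * ksum\<^sup>2) * E x t / 2"
      using phi_sq_le[OF j, of x t] phi_x_sq_le[OF j, of x t] by (simp add: algebra_simps)
    finally have "k j * \<bar>phi j x t * phi_x j x t\<bar> \<le> ksum * ((1 + 10 * ksum\<^sup>2) * E x t / 2)"
      using k_pos[OF j] k_le_ksum[OF j] ksum_nonneg by (intro mult_mono) auto
    then show ?thesis
      using k_pos[OF j] by (simp add: abs_mult mult.assoc)
  qed
  then have "(\<Sum>j<N. \<bar>k j * phi j x t * phi_x j x t\<bar>) \<le> (\<Sum>j<N. ksum * ((1 + 10 * ksum\<^sup>2) * E x t / 2))"
    by (intro sum_mono) simp
  moreover have "\<bar>u_x x t\<bar> \<le> 8 * (\<Sum>j<N. \<bar>k j * phi j x t * phi_x j x t\<bar>)"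
  proof -
    have "\<bar>u_x x t\<bar> = 8 * \<bar>\<Sum>j<N. k j * phi j x t * phi_x j x t\<bar>"
      unfolding u_x_def by simp
    then show ?thesis by (simp only: mult_left_mono sum_abs)
  qed
  moreover have "8 * (\<Sum>j<N. ksum * ((1 + 10 * ksum\<^sup>2) * E x t / 2))
      = 4 * N * ksum * (1 + 10 * ksum\<^sup>2) * E x t"
    by (simp add: algebra_simps)
  ultimately show ?thesis by linarith
qed

lemma u_x_has_integral: "((\<lambda>y. u_x y t) has_integral u x t) {..x}"
proof (rule fundamental_theorem_of_calculus_atMost_dominated
    [where h = "\<lambda>y. 4 * N * ksum * (1 + 10 * ksum\<^sup>2) * E y t"])
  show "((\<lambda>y. u y t) has_real_derivative u_x y t) (at y)" for y
    by (rule u_has_derivative_x)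
  show "\<bar>u_x y t\<bar> \<le> 4 * N * ksum * (1 + 10 * ksum\<^sup>2) * E y t" for y
    by (rule abs_u_x_le)
  show "((\<lambda>y. u y t) \<longlongrightarrow> 0) at_bot"
    by (rule tendsto_at_bot_zero_if_le_E[OF abs_u_le])
qed (rule E_integrable)

text \<open>An antiderivative of \<open>u\<^sub>x \<phi>\<^sub>i\<^sup>2\<close>, by the eigenfunction equation.\<close>
definition H :: "nat \<Rightarrow> real \<Rightarrow> real \<Rightarrow> real" where
  "H i x t = (phi_x i x t)\<^sup>2 + u x t * (phi i x t)\<^sup>2 - (k i)\<^sup>2 * (phi i x t)\<^sup>2"

lemma H_has_derivative_x: "i < N \<Longrightarrow> ((\<lambda>y. H i y t) has_real_derivative u_x x t * (phi i x t)\<^sup>2) (at x)"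
  unfolding H_def
  by (rule derivative_eq_intros phi_x_has_derivative_x u_has_derivative_x phi_has_derivative_x refl
      | assumption)+
    (simp add: power2_eq_square algebra_simps)

lemma H_tendsto_zero:
  assumes i: "i < N"
  shows "((\<lambda>y. H i y t) \<longlongrightarrow> 0) at_bot"
proof -
  have "((\<lambda>y. (phi_x i y t)\<^sup>2) \<longlongrightarrow> 0) at_bot"
    using phi_x_sq_le[OF i] by (intro tendsto_at_bot_zero_if_le_E) simp
  moreover have "((\<lambda>y. u y t) \<longlongrightarrow> 0) at_bot"
    using abs_u_le by (rule tendsto_at_bot_zero_if_le_E)
  moreover have "((\<lambda>y. (phi i y t)\<^sup>2) \<longlongrightarrow> 0) at_bot"
    using phi_sq_le[OF i] by (intro tendsto_at_bot_zero_if_le_E[where c = 1]) simp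
  ultimately have "((\<lambda>y. H i y t) \<longlongrightarrow> 0 + 0 * 0 - (k i)\<^sup>2 * 0) at_bot"
    unfolding H_def by (intro tendsto_intros)
  then show ?thesis by simp
qed

lemma u_x_phi_sq_has_integral:
  assumes i: "i < N"
  shows "((\<lambda>y. u_x y t * (phi i y t)\<^sup>2) has_integral H i x t) {..x}"
proof (rule fundamental_theorem_of_calculus_atMost_dominated
    [where h = "\<lambda>y. (4 * N * ksum * (1 + 10 * ksum\<^sup>2) * E x t) * E y t"])
  show "\<bar>u_x y t * (phi i y t)\<^sup>2\<bar> \<le> 4 * N * ksum * (1 + 10 * ksum\<^sup>2) * E x t * E y t"
    if "y \<le> x" for y
  proof -
    have "\<bar>u_x y t * (phi i y t)\<^sup>2\<bar> \<le> (4 * N * ksum * (1 + 10 * ksum\<^sup>2) * E y t) * E y t"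
      unfolding abs_mult
      using abs_u_x_le phi_sq_le[OF i] E_nonneg ksum_nonneg by (intro mult_mono) auto
    also have "\<dots> \<le> (4 * N * ksum * (1 + 10 * ksum\<^sup>2) * E x t) * E y t"
      using E_mono[OF that] E_nonneg ksum_nonneg by (intro mult_right_mono mult_left_mono) auto
    finally show ?thesis .
  qed
qed (use H_has_derivative_x[OF i] E_integrable H_tendsto_zero[OF i] in auto)

section \<open>The recursion operator\<close>

lemma dx_sum_phi_sq:
  "dx (\<lambda>x t. \<Sum>i<N. c i * (phi i x t)\<^sup>2) = (\<lambda>x t. \<Sum>i<N. c i * (2 * phi i x t * phi_x i x t))"
  unfolding dx_def
  by (intro ext DERIV_imp_deriv DERIV_sum) (auto intro!: derivative_eq_intros phi_has_derivative_x)

lemma dx_dx_sum_phi_sq: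
  "dx (dx (\<lambda>x t. \<Sum>i<N. c i * (phi i x t)\<^sup>2)) x t
    = (\<Sum>i<N. c i * (2 * (phi_x i x t)\<^sup>2 + 2 * ((k i)\<^sup>2 - u x t) * (phi i x t)\<^sup>2))"
  unfolding dx_sum_phi_sq dx_def
  by (intro DERIV_imp_deriv DERIV_sum)
    (auto intro!: derivative_eq_intros phi_has_derivative_x phi_x_has_derivative_x
      simp: power2_eq_square algebra_simps)

lemma dinv_u_x_sum_phi_sq:
  "dinv (\<lambda>y s. dx u y s * (\<Sum>i<N. c i * (phi i y s)\<^sup>2)) x t = (\<Sum>i<N. c i * H i x t)"
proof -
  have "((\<lambda>y. \<Sum>i<N. c i * (u_x y t * (phi i y t)\<^sup>2)) has_integral (\<Sum>i<N. c i * H i x t)) {..x}"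
    by (intro has_integral_sum has_integral_mult_right u_x_phi_sq_has_integral) auto
  then show ?thesis
    unfolding dinv_def dx_u by (simp add: integral_unique sum_distrib_left mult_ac)
qed

lemma Lop_sum_phi_sq:
  "Lop u (\<lambda>x t. \<Sum>i<N. c i * (phi i x t)\<^sup>2) = (\<lambda>x t. \<Sum>i<N. c i * - (k i)\<^sup>2 * (phi i x t)\<^sup>2)"
proof (intro ext)
  fix x t
  have "Lop u (\<lambda>x t. \<Sum>i<N. c i * (phi i x t)\<^sup>2) x t
    = (\<Sum>i<N. - (1/4) * (c i * (2 * (phi_x i x t)\<^sup>2 + 2 * ((k i)\<^sup>2 - u x t) * (phi i x t)\<^sup>2))
        - u x t * (c i * (phi i x t)\<^sup>2) + (1/2) * (c i * H i x t))"
    unfolding Lop_def dx_dx_sum_phi_sq dinv_u_x_sum_phi_sq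
    by (simp add: sum_distrib_left sum.distrib sum_subtractf)
  also have "\<dots> = (\<Sum>i<N. c i * - (k i)\<^sup>2 * (phi i x t)\<^sup>2)"
    by (rule sum.cong) (simp_all add: H_def algebra_simps)
  finally show "Lop u (\<lambda>x t. \<Sum>i<N. c i * (phi i x t)\<^sup>2) x t = (\<Sum>i<N. c i * - (k i)\<^sup>2 * (phi i x t)\<^sup>2)" .
qed

lemma Lop_one: "Lop u (\<lambda>x t. 1) = (\<lambda>x t. - u x t / 2)"
proof -
  have "dinv (\<lambda>y s. dx u y s * 1) x t = u x t" for x t
    unfolding dinv_def dx_u using u_x_has_integral by (simp add: integral_unique)
  moreover have "dx (\<lambda>x t. c) = (\<lambda>x t. 0)" for c :: real
    unfolding dx_def by simp
  ultimately show ?thesis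
    unfolding Lop_def by simp
qed

lemma bseq_eq: "bseq u (Suc (Suc m)) = (\<lambda>x t. \<Sum>i<N. - 2 * k i * (- (k i)\<^sup>2) ^ m * (phi i x t)\<^sup>2)"
proof (induction m)
  case 0
  have "- u x t / 2 = - 2 * (\<Sum>i<N. k i * (phi i x t)\<^sup>2)" for x t
    by (simp add: u_def)
  then show ?case
    by (simp add: Lop_one sum_distrib_left mult.assoc)
next
  case (Suc m)
  show ?case
    unfolding bseq.simps(3)[of u "Suc m"] Suc.IH Lop_sum_phi_sq by (simp add: mult_ac)
qed

lemma dt_u: "dt u x t = dx (\<lambda>x t. \<Sum>i<N. 4 * \<omega> i * (phi i x t)\<^sup>2) x t"
  unfolding dt_def dx_sum_phi_sq using DERIV_imp_deriv[OF u_has_derivative_t]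
  by (simp add: sum_distrib_left mult_ac)

lemma phi_eigenfunction: "i < N \<Longrightarrow> dx (dx (phi i)) x t + (- (k i)\<^sup>2 + u x t) * phi i x t = 0"
proof -
  assume i: "i < N"
  have "dx (phi i) = phi_x i"
    unfolding dx_def by (intro ext DERIV_imp_deriv phi_has_derivative_x i)
  moreover have "dx (phi_x i) x t = ((k i)\<^sup>2 - u x t) * phi i x t"
    unfolding dx_def by (intro DERIV_imp_deriv phi_x_has_derivative_x i)
  ultimately show ?thesis by (simp add: algebra_simps)
qed

lemma kdv_flow:
  assumes "\<And>j. j < N \<Longrightarrow> \<omega> j = (- 1) ^ n * k j ^ (2 * n + 1) - \<alpha> / 2"
  shows "dt u x t = dx (\<lambda>y s. - 2 * bseq u (n + 2) y s - 2 * \<alpha> * (\<Sum>j<N. (phi j y s)\<^sup>2)) x t"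
proof -
  have coeff: "- 2 * (- 2 * k i * (- (k i)\<^sup>2) ^ n) - 2 * \<alpha> = 4 * \<omega> i" if "i < N" for i
  proof -
    have "- 2 * (- 2 * k i * (- (k i)\<^sup>2) ^ n) - 2 * \<alpha> = 4 * (k i * (- (k i)\<^sup>2) ^ n) - 2 * \<alpha>"
      by simp
    also have "\<dots> = 4 * \<omega> i"
      unfolding mult_power_minus_square assms[OF that] by simp
    finally show ?thesis .
  qed
  have "- 2 * bseq u (n + 2) y s - 2 * \<alpha> * (\<Sum>j<N. (phi j y s)\<^sup>2)
      = (\<Sum>i<N. (- 2 * (- 2 * k i * (- (k i)\<^sup>2) ^ n) - 2 * \<alpha>) * (phi i y s)\<^sup>2)" for y s
    unfolding bseq_eq[of n, folded add_2_eq_Suc']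
    by (simp add: sum_distrib_left sum_subtractf left_diff_distrib mult.assoc)
  also have "\<dots> y s = (\<Sum>i<N. 4 * \<omega> i * (phi i y s)\<^sup>2)" for y s
  proof (rule sum.cong[OF refl])
    fix i assume "i \<in> {..<N}"
    then show "(- 2 * (- 2 * k i * (- (k i)\<^sup>2) ^ n) - 2 * \<alpha>) * (phi i y s)\<^sup>2 = 4 * \<omega> i * (phi i y s)\<^sup>2"
      by (simp only: coeff lessThan_iff)
  qed
  finally show ?thesis
    by (simp add: dt_u)
qed

section \<open>Wronskians\<close>

lemma dinv_f_mult:
  assumes "a < N" "b < N"
  shows "dinv (\<lambda>y s. f a y s * f b y s) x t = f a x t * f b x t / (k a + k b)"
proof -
  have "f a y t * f b y t = exp ((k a + k b) * y + ((\<omega> a + \<omega> b) * t + x0 a + x0 b))" for y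
    unfolding f_def by (simp add: exp_add[symmetric] algebra_simps)
  moreover have "k a + k b > 0"
    using k_pos assms by (simp add: add_pos_pos)
  ultimately show ?thesis
    unfolding dinv_def using has_integral_exp_atMost by (simp add: integral_unique)
qed

lemma W1_eq_tau: "W1 (map f [0..<N]) x t = tau N k (fvec x t)"
  unfolding W1_def tau_def cauchy_mat_def
  by (intro arg_cong[where f = det] eq_matI) (auto simp: dinv_f_mult cauchy_entry_def fvec_def)

lemma W2_snoc_eq_tau_phi:
  assumes j: "j < N"
  shows "W2 (map f [0..<N] @ [f j]) x t = tau N k (fvec x t) * phi j x t"
proof -
  have "W2 (map f [0..<N] @ [f j]) x t = det (mat (Suc N) (Suc N) (\<lambda>(r,c). if r < N
      then (if c < N then cauchy_entry k (fvec x t) r c else fvec x t r * fvec x t j / (k r + k j))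
      else (if c < N then fvec x t c else fvec x t j)))"
    unfolding W2_def using j
    by (intro arg_cong[where f = det] eq_matI)
      (auto simp: nth_append dinv_f_mult cauchy_entry_def fvec_def less_Suc_eq)
  then show ?thesis
    unfolding phi_def using det_cauchy_bordered[OF j] by simp
qed

lemma W2_remove_snoc_eq_tau_phi:
  assumes j: "j < N"
  shows "W2 (take j (map f [0..<N]) @ drop (Suc j) (map f [0..<N]) @ [f j]) x t
    = tau N k (fvec x t) * phi j x t"
proof -
  define A where "A r c = (if r = j then fvec x t c else cauchy_entry k (fvec x t) r c)" for r c
  let ?\<sigma> = "move_to_last N j"
  have "W2 (take j (map f [0..<N]) @ drop (Suc j) (map f [0..<N]) @ [f j]) x t
      = det (mat N N (\<lambda>(a,b). A (?\<sigma> a) (?\<sigma> b)))"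
    unfolding W2_def using j
    by (intro arg_cong[where f = det] eq_matI)
      (auto simp: nth_remove_snoc_map_upt A_def dinv_f_mult cauchy_entry_def fvec_def move_to_last_def)
  also have "\<dots> = det (mat N N (\<lambda>(a,b). A a b))"
    by (rule det_mat_permute_rows_cols[OF move_to_last_permutes[OF j]])
  finally show ?thesis
    unfolding A_def phi_def using det_cauchy_row_replaced[OF j] by simp
qed

lemma u_eq_dx_dx_ln_W1: "(\<lambda>x t. 2 * dx (dx (\<lambda>y s. ln (W1 (map f [0..<N]) y s))) x t) = u"
proof -
  have dx_ln_W1: "dx (\<lambda>y s. ln (W1 (map f [0..<N]) y s)) = S"
    unfolding W1_eq_tau dx_def by (intro ext DERIV_imp_deriv ln_tau_has_derivative_x)
  have dx_S: "dx S x t = u x t / 2" for x t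
    unfolding dx_def by (rule DERIV_imp_deriv[OF S_has_derivative_x])
  show ?thesis
    unfolding dx_ln_W1 by (simp add: dx_S)
qed

end

theorem mainTheorem6:
  fixes n N :: nat and \<alpha> :: real and k x0 :: "nat \<Rightarrow> real"
    and f \<phi> :: "nat \<Rightarrow> real \<Rightarrow> real \<Rightarrow> real" and u :: "real \<Rightarrow> real \<Rightarrow> real"
    and fs :: "(real \<Rightarrow> real \<Rightarrow> real) list"
  assumes kpos: "\<And>j. j < N \<Longrightarrow> k j > 0"
    and kdist: "\<And>i j. i < N \<Longrightarrow> j < N \<Longrightarrow> i \<noteq> j \<Longrightarrow> k i \<noteq> k j"
    and f_def: "f = (\<lambda>j x t. exp (k j * x + (-1) ^ n * k j ^ (2 * n + 1) * t - \<alpha> * t / 2 + x0 j))"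
    and fs_def: "fs = map f [0..<N]"
    and u_def: "u = (\<lambda>x t. 2 * dx (dx (\<lambda>y s. ln (W1 fs y s))) x t)"
    and phi_def: "\<phi> = (\<lambda>j x t. W2 (fs @ [f j]) x t / W1 fs x t)"
  shows "(\<forall>j<N. \<forall>x t. \<phi> j x t = W2 (take j fs @ drop (Suc j) fs @ [f j]) x t / W1 fs x t)
     \<and> (\<forall>x t. dt u x t = dx (\<lambda>y s. - 2 * bseq u (n + 2) y s - 2 * \<alpha> * (\<Sum>j<N. (\<phi> j y s)\<^sup>2)) x t)
     \<and> (\<forall>j<N. \<forall>x t. dx (dx (\<phi> j)) x t + (- (k j)\<^sup>2 + u x t) * \<phi> j x t = 0)"
proof -
  define \<omega> where "\<omega> j = (- 1) ^ n * k j ^ (2 * n + 1) - \<alpha> / 2" for j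
  interpret K: n_soliton N k \<omega> x0
    by unfold_locales (rule kpos)
  have f_eq: "f = K.f"
    unfolding f_def by (intro ext) (simp add: K.f_def \<omega>_def algebra_simps)
  have u_eq: "u = K.u"
    unfolding u_def fs_def f_eq K.u_eq_dx_dx_ln_W1 ..
  have phi_eq: "\<phi> j = K.phi j" if "j < N" for j
    unfolding phi_def fs_def f_eq
    using K.tau_nonzero by (intro ext) (simp add: K.W2_snoc_eq_tau_phi[OF that] K.W1_eq_tau)
  show ?thesis
    unfolding u_eq fs_def f_eq
    using K.tau_nonzero K.kdv_flow[OF \<omega>_def] K.phi_eigenfunction
    by (simp add: phi_eq K.W2_remove_snoc_eq_tau_phi K.W1_eq_tau)
qed

end
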